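(* Let $\sigma$ be an erasing $k$-block substitution with $w_\epsilon\ne1^k$ that satisfies the optimality condition. Then the point $x_0=0.w_\epsilon^\infty$ is an almost fixed point of $f_\sigma$.
   Context: Notation: $\mathbb I=[0,1]$. $\{0,1\}^*$ and $\{0,1\}^\omega$ denote finite and infinite binary words, and $\epsilon$ is the empty word. For a word $w$, set $0.w=\sum_iw_i2^{-i}$. For $x\in(0,1]$, $\widetilde x$ is the unique infinite binary expansion of $x$ not ending in $0^\infty$. Fix $k\ge2$. An erasing $k$-block substitution is a map $\sigma:\{0,1\}^k\to\{0,1\}^*$ with exactly one block $w_\epsilon$ such that $\sigma(w_\epsilon)=\epsilon$. It acts blockwise on infinite words, concatenating the images of consecutive $k$-blocks. The map $f_\sigma:\mathbb I\to\mathbb I$ is defined by $f_\sigma(x)=0.\sigma(\widetilde x)$ if $x\in(0,1]$ and $\widetilde x\neq w_\epsilon^\infty$, and $f_\sigma(x)=0$ otherwise. Optimality condition: every $w\in\{0,1\}^\omega$ can be written as $w=\prod_{i\ge1}\sigma(b_i)$ with blocks $b_i\in\{0,1\}^k$ satisfying $\sigma(b_i)\ne\epsilon$. Almost fixed point: for $f:\mathbb I\to\mathbb I$ and $x\in\mathbb I$, set $R^-(f,x)=\{y:f^{-1}(y)\cap(x-\varepsilon,x)\ne\emptyset\ \forall\varepsilon>0\}$ and $R^+(f,x)=\{y:f^{-1}(y)\cap(x,x+\varepsilon)\ne\emptyset\ \forall\varepsilon>0\}$. The point $x$ is an almost fixed point of $f$ if $x$ belongs to the interior (in $\mathbb I$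 with its usual topology) of $R^-(f,x)$ or of $R^+(f,x)$. *)

theory Defs
  imports "HOL-Analysis.Analysis"
begin

text \<open>Binary words: a bit is a bool (True = 1). Finite words are bool lists,
infinite words are functions nat => bool (position n is the (n+1)-st digit).\<close>

definition bin_val :: "(nat \<Rightarrow> bool) \<Rightarrow> real" where
  "bin_val w = (\<Sum>n. (if w n then 1 else 0) * (1/2) ^ Suc n)"

text \<open>The unique infinite binary expansion of x in (0,1] not ending in 0^omega.\<close>
definition expansion :: "real \<Rightarrow> (nat \<Rightarrow> bool)" where
  "expansion x = (THE w. (\<forall>n. \<exists>m\<ge>n. w m) \<and> bin_val w = x)"

definition block :: "nat \<Rightarrow> (nat \<Rightarrow> bool) \<Rightarrow> nat \<Rightarrow> bool list" where
  "block k w i = map (\<lambda>j. w (i * k + j)) [0..<k]"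

text \<open>Concatenation u_0 u_1 u_2 ... of finite words. If the result is a finite
word it is padded with zeros (which does not change its binary value).\<close>
definition concat_word :: "(nat \<Rightarrow> bool list) \<Rightarrow> nat \<Rightarrow> bool" where
  "concat_word u n = (\<exists>i j. j < length (u i) \<and> n = (\<Sum>l<i. length (u l)) + j \<and> u i ! j)"

definition erasing_block_subst :: "nat \<Rightarrow> (bool list \<Rightarrow> bool list) \<Rightarrow> bool" where
  "erasing_block_subst k \<sigma> \<longleftrightarrow> (\<exists>!b. length b = k \<and> \<sigma> b = [])"

definition w_eps :: "nat \<Rightarrow> (bool list \<Rightarrow> bool list) \<Rightarrow> bool list" where
  "w_eps k \<sigma> = (THE b. length b = k \<and> \<sigma> b = [])"

definition omega_word :: "bool list \<Rightarrow> nat \<Rightarrow> bool" where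
  "omega_word u n = u ! (n mod length u)"

definition f_sigma :: "nat \<Rightarrow> (bool list \<Rightarrow> bool list) \<Rightarrow> real \<Rightarrow> real" where
  "f_sigma k \<sigma> x =
     (if 0 < x \<and> x \<le> 1 \<and> expansion x \<noteq> omega_word (w_eps k \<sigma>)
      then bin_val (concat_word (\<lambda>i. \<sigma> (block k (expansion x) i)))
      else 0)"

definition optimal :: "nat \<Rightarrow> (bool list \<Rightarrow> bool list) \<Rightarrow> bool" where
  "optimal k \<sigma> \<longleftrightarrow> (\<forall>w :: nat \<Rightarrow> bool. \<exists>b :: nat \<Rightarrow> bool list.
      (\<forall>i. length (b i) = k \<and> \<sigma> (b i) \<noteq> []) \<and> w = concat_word (\<lambda>i. \<sigma> (b i)))"

definition R_minus :: "(real \<Rightarrow> real) \<Rightarrow> real \<Rightarrow> real set" where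
  "R_minus f x = {y. \<forall>e>0. \<exists>t\<in>{0..1}. x - e < t \<and> t < x \<and> f t = y}"

definition R_plus :: "(real \<Rightarrow> real) \<Rightarrow> real \<Rightarrow> real set" where
  "R_plus f x = {y. \<forall>e>0. \<exists>t\<in>{0..1}. x < t \<and> t < x + e \<and> f t = y}"

definition almost_fixed_point :: "(real \<Rightarrow> real) \<Rightarrow> real \<Rightarrow> bool" where
  "almost_fixed_point f x \<longleftrightarrow>
     x \<in> (top_of_set {0..1}) interior_of (R_minus f x) \<or>
     x \<in> (top_of_set {0..1}) interior_of (R_plus f x)"

end

theory Submission
  imports Defs
begin

text \<open>Write \<open>x\<^sub>0 = 0.w\<^sub>\<epsilon>\<^sup>\<omega>\<close> and use optimality to decompose
\<open>w\<^sub>\<epsilon>\<^sup>\<omega> = \<sigma>(b\<^sub>0) \<sigma>(b\<^sub>1) \<dots>\<close>, with \<open>p = \<sigma>(b\<^sub>0)\<close>.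
Since \<open>w\<^sub>\<epsilon>\<close> contains a 0, every \<open>y\<close> close enough to \<open>x\<^sub>0\<close> has a binary
expansion beginning with \<open>p\<close>, so by optimality again \<open>y = 0.p \<sigma>(c\<^sub>0) \<sigma>(c\<^sub>1) \<dots>\<close>
with non-erased blocks \<open>c\<^sub>i\<close>. The point with expansion
\<open>w\<^sub>\<epsilon>\<^sup>n b\<^sub>0 c\<^sub>0 w\<^sub>\<epsilon> c\<^sub>1 w\<^sub>\<epsilon> c\<^sub>2 \<dots>\<close> is mapped to \<open>y\<close>.
Its expansion agrees with \<open>w\<^sub>\<epsilon>\<^sup>\<omega>\<close> up to the first digit where \<open>b\<^sub>0\<close> differs
from \<open>w\<^sub>\<epsilon>\<close>, so it lies within \<open>2^(-n k)\<close> of \<open>x\<^sub>0\<close>, on the side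
fixed by that digit of \<open>b\<^sub>0\<close>, independently of \<open>y\<close>.\<close>

lemma obtain_first_difference:
  fixes u v :: "nat \<Rightarrow> 'a"
  assumes "u j \<noteq> v j"
  obtains i where "i \<le> j" "u i \<noteq> v i" "\<forall>n<i. u n = v n"
proof
  let ?i = "LEAST i. u i \<noteq> v i"
  show "?i \<le> j" "u ?i \<noteq> v ?i"
    using Least_le[of "\<lambda>i. u i \<noteq> v i" j] LeastI[of "\<lambda>i. u i \<noteq> v i" j] assms by simp_all
  show "\<forall>n<?i. u n = v n"
    using not_less_Least by blast
qed

definition bin_term :: "(nat \<Rightarrow> bool) \<Rightarrow> nat \<Rightarrow> real" where
  "bin_term u n = (if u n then 1 else 0) * (1/2) ^ Suc n"

lemma bin_val_eq_suminf: "bin_val u = suminf (bin_term u)"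
  unfolding bin_val_def bin_term_def ..

lemma bin_term_nonneg: "0 \<le> bin_term u n"
  by (simp add: bin_term_def)

lemma bin_term_le: "bin_term u n \<le> (1/2) ^ Suc n"
  by (simp add: bin_term_def)

lemma sums_half_powers: "(\<lambda>n. (1/2::real) ^ Suc n) sums 1"
  using sums_mult[OF geometric_sums[of "1/2::real"], of "1/2"] by simp

lemma summable_bin_term: "summable (bin_term u)"
  using summable_comparison_test[of "bin_term u" "\<lambda>n. (1/2::real) ^ Suc n"]
    bin_term_le bin_term_nonneg sums_half_powers sums_summable by auto

lemma bin_val_nonneg: "0 \<le> bin_val u"
  unfolding bin_val_eq_suminf by (rule suminf_nonneg[OF summable_bin_term bin_term_nonneg])

lemma bin_val_le_1: "bin_val u \<le> 1"
  using suminf_le[OF bin_term_le summable_bin_term sums_summable[OF sums_half_powers]]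
    sums_unique[OF sums_half_powers]
  by (simp add: bin_val_eq_suminf)

lemma bin_val_ge_digit:
  assumes "u i"
  shows "(1/2) ^ Suc i \<le> bin_val u"
proof -
  have "sum (bin_term u) {i} \<le> suminf (bin_term u)"
    by (rule sum_le_suminf) (use summable_bin_term bin_term_nonneg in auto)
  then show ?thesis
    using assms by (simp add: bin_val_eq_suminf bin_term_def)
qed

lemma bin_val_pos: "u i \<Longrightarrow> 0 < bin_val u"
  by (rule less_le_trans[OF _ bin_val_ge_digit]) simp_all

lemma bin_val_le_digit_zero:
  assumes "\<not> u i"
  shows "bin_val u \<le> 1 - (1/2) ^ Suc i"
proof -
  let ?g = "\<lambda>n. if n = i then (1/2::real) ^ Suc n else 0"
  have sums: "(\<lambda>n. bin_term u n + ?g n) sums (bin_val u + (1/2) ^ Suc i)"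
    unfolding bin_val_eq_suminf
    by (rule sums_add[OF summable_sums[OF summable_bin_term] sums_single])
  have "\<And>n. bin_term u n + ?g n \<le> (1/2) ^ Suc n"
    using assms by (auto simp: bin_term_def)
  then have "bin_val u + (1/2) ^ Suc i \<le> 1"
    using sums sums_half_powers by (rule sums_le)
  then show ?thesis by simp
qed

lemma bin_val_split:
  "bin_val u = (\<Sum>n<m. bin_term u n) + (1/2) ^ m * bin_val (\<lambda>n. u (n + m))"
proof -
  have "(\<lambda>n. bin_term u (n + m)) = (\<lambda>n. (1/2) ^ m * bin_term (\<lambda>n. u (n + m)) n)"
    by (auto simp: bin_term_def power_add)
  then show ?thesis
    using suminf_split_initial_segment[OF summable_bin_term, of u m]
      suminf_mult[OF summable_bin_term, of "(1/2) ^ m"]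
    by (simp add: bin_val_eq_suminf)
qed

lemma bin_val_diff_common_prefix:
  assumes "\<forall>n<m. u n = v n"
  shows "bin_val u - bin_val v =
    (1/2) ^ m * (bin_val (\<lambda>n. u (n + m)) - bin_val (\<lambda>n. v (n + m)))"
proof -
  have "(\<Sum>n<m. bin_term u n) = (\<Sum>n<m. bin_term v n)"
    using assms by (auto simp: bin_term_def intro: sum.cong)
  then show ?thesis
    using bin_val_split[of u m] bin_val_split[of v m] by (simp add: right_diff_distrib)
qed

lemma bin_val_dist_common_prefix:
  assumes "\<forall>n<m. u n = v n"
  shows "\<bar>bin_val u - bin_val v\<bar> \<le> (1/2) ^ m"
proof -
  let ?u = "\<lambda>n. u (n + m)" and ?v = "\<lambda>n. v (n + m)"
  have "\<bar>bin_val ?u - bin_val ?v\<bar> \<le> 1"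
    using bin_val_nonneg[of ?u] bin_val_le_1[of ?u] bin_val_nonneg[of ?v] bin_val_le_1[of ?v]
    by linarith
  then show ?thesis
    using bin_val_diff_common_prefix[OF assms] mult_left_mono[of _ 1 "(1/2::real) ^ m"]
    by (simp add: abs_mult)
qed

lemma bin_val_diff_first_difference:
  assumes "\<forall>n<j. u n = v n" "u j" "\<not> v j"
  shows "bin_val u - bin_val v =
    (1/2) ^ Suc j * (1 + bin_val (\<lambda>n. u (n + Suc j)) - bin_val (\<lambda>n. v (n + Suc j)))"
proof -
  have "(\<Sum>n<j. bin_term u n) = (\<Sum>n<j. bin_term v n)"
    using assms by (auto simp: bin_term_def intro: sum.cong)
  moreover have "bin_term u j = (1/2) ^ Suc j" "bin_term v j = 0"
    using assms by (auto simp: bin_term_def)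
  ultimately show ?thesis
    using bin_val_split[of u "Suc j"] bin_val_split[of v "Suc j"] by (simp add: algebra_simps)
qed

lemma bin_val_less_first_difference:
  assumes "\<forall>n<j. u n = v n" "u j" "\<not> v j" "j < i" "u i"
  shows "bin_val v < bin_val u"
proof -
  let ?u = "\<lambda>n. u (n + Suc j)" and ?v = "\<lambda>n. v (n + Suc j)"
  have "0 < bin_val ?u"
    using assms(4,5) by (intro bin_val_pos[of _ "i - Suc j"]) simp
  then have "0 < (1/2::real) ^ Suc j * (1 + bin_val ?u - bin_val ?v)"
    using bin_val_le_1[of ?v] by simp
  then show ?thesis
    using bin_val_diff_first_difference[OF assms(1-3)] by linarith
qed

lemma bin_val_gap_first_difference:
  assumes "\<forall>n<j. u n = v n" "u j" "\<not> v j" "j < i" "i \<le> j + k" "u i \<or> \<not> v i"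
  shows "(1/2) ^ (Suc j + k) \<le> bin_val u - bin_val v"
proof -
  let ?u = "\<lambda>n. u (n + Suc j)" and ?v = "\<lambda>n. v (n + Suc j)" and ?l = "i - Suc j"
  have "?u ?l = u i" "?v ?l = v i"
    using assms(4) by simp_all
  then have "(1/2) ^ Suc ?l \<le> 1 + bin_val ?u - bin_val ?v"
    using assms(6) bin_val_ge_digit[of ?u ?l] bin_val_le_digit_zero[of ?v ?l]
      bin_val_nonneg[of ?u] bin_val_le_1[of ?v]
    by auto
  moreover have "(1/2::real) ^ k \<le> (1/2) ^ Suc ?l"
    using assms(4,5) by (intro power_decreasing) auto
  ultimately have "(1/2::real) ^ Suc j * (1/2) ^ k \<le> (1/2) ^ Suc j * (1 + bin_val ?u - bin_val ?v)"
    by (intro mult_left_mono) auto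
  then show ?thesis
    using bin_val_diff_first_difference[OF assms(1-3)] by (simp add: power_add)
qed

lemma floor_double: "\<lfloor>2 * (t::real)\<rfloor> = 2 * \<lfloor>t\<rfloor> + (if odd \<lfloor>2 * t\<rfloor> then 1 else 0)"
proof -
  have "2 * \<lfloor>t\<rfloor> \<le> \<lfloor>2 * t\<rfloor>" "\<lfloor>2 * t\<rfloor> \<le> 2 * \<lfloor>t\<rfloor> + 1"
    by linarith+
  then show ?thesis by (cases "\<lfloor>2 * t\<rfloor> = 2 * \<lfloor>t\<rfloor>") auto
qed

lemma dyadic_floor_tendsto: "(\<lambda>m. \<lfloor>2 ^ m * y\<rfloor> / 2 ^ m) \<longlonglongrightarrow> (y::real)"
proof (rule tendsto_sandwich[of "\<lambda>m. y - (1/2) ^ m" _ _ "\<lambda>_. y"])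
  show "\<forall>\<^sub>F m in sequentially. y - (1/2) ^ m \<le> \<lfloor>2 ^ m * y\<rfloor> / 2 ^ m"
  proof (intro always_eventually allI)
    fix m :: nat
    have "2 ^ m * y - 1 \<le> \<lfloor>2 ^ m * y\<rfloor>"
      by linarith
    then have "(2 ^ m * y - 1) / 2 ^ m \<le> \<lfloor>2 ^ m * y\<rfloor> / (2::real) ^ m"
      by (simp add: divide_right_mono)
    then show "y - (1/2) ^ m \<le> \<lfloor>2 ^ m * y\<rfloor> / 2 ^ m"
      by (simp add: field_simps power_divide)
  qed
  show "\<forall>\<^sub>F m in sequentially. \<lfloor>2 ^ m * y\<rfloor> / 2 ^ m \<le> y"
    by (intro always_eventually allI) (simp add: divide_le_eq mult.commute)
  show "(\<lambda>m. y - (1/2::real) ^ m) \<longlonglongrightarrow> y"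
    using tendsto_diff[OF tendsto_const LIMSEQ_power_zero[of "1/2::real"]] by simp
qed simp

lemma bin_val_surj:
  assumes "0 \<le> y" "y \<le> (1::real)"
  obtains v where "bin_val v = y"
proof (cases "y = 1")
  case True
  have "bin_val (\<lambda>_. True) = 1"
    using sums_unique[OF sums_half_powers] by (simp add: bin_val_def)
  then show ?thesis using True that by blast
next
  case False
  define v where "v n = odd \<lfloor>2 ^ Suc n * y\<rfloor>" for n
  have "(\<Sum>n<m. bin_term v n) = \<lfloor>2 ^ m * y\<rfloor> / 2 ^ m" for m
  proof (induction m)
    case 0
    have "\<lfloor>y\<rfloor> = 0" using assms False by (simp add: floor_eq_iff)
    then show ?case by simp
  next
    case (Suc m)
    have "real_of_int \<lfloor>2 ^ Suc m * y\<rfloor> = 2 * \<lfloor>2 ^ m * y\<rfloor> + (if v m then 1 else 0)"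
      using floor_double[of "2 ^ m * y"] by (simp add: v_def mult.assoc)
    then show ?case
      using Suc by (simp add: bin_term_def field_simps power_divide)
  qed
  then have "bin_term v sums y"
    using dyadic_floor_tendsto[of y] by (simp add: sums_def)
  then show ?thesis
    using that sums_unique bin_val_eq_suminf by metis
qed

lemma expansion_bin_val:
  assumes ones: "\<forall>N. \<exists>m\<ge>N. W m"
  shows "expansion (bin_val W) = W"
  unfolding expansion_def
proof (rule the_equality)
  show "(\<forall>n. \<exists>m\<ge>n. W m) \<and> bin_val W = bin_val W" using ones by simp
next
  fix W' assume W': "(\<forall>n. \<exists>m\<ge>n. W' m) \<and> bin_val W' = bin_val W"
  show "W' = W"
  proof (rule ccontr)
    assume "W' \<noteq> W"
    then obtain j0 where "W' j0 \<noteq> W j0" by blast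
    then obtain j where "W' j \<noteq> W j" and agree: "\<forall>n<j. W' n = W n"
      by (rule obtain_first_difference)
    obtain i where "j < i" "W i"
      using ones by (metis Suc_le_eq)
    obtain i' where "j < i'" "W' i'"
      using W' by (metis Suc_le_eq)
    have "bin_val W' \<noteq> bin_val W"
    proof (cases "W j")
      case True
      then show ?thesis
        using \<open>W' j \<noteq> W j\<close> agree \<open>j < i\<close> \<open>W i\<close>
        by (metis bin_val_less_first_difference less_irrefl)
    next
      case False
      then show ?thesis
        using \<open>W' j \<noteq> W j\<close> agree \<open>j < i'\<close> \<open>W' i'\<close>
        by (metis bin_val_less_first_difference less_irrefl)
    qed
    then show False using W' by simp
  qed
qed

definition syndetic :: "nat \<Rightarrow> (nat \<Rightarrow> bool) \<Rightarrow> bool" where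
  "syndetic k P \<longleftrightarrow> (\<forall>i. \<exists>j. i \<le> j \<and> j < i + k \<and> P j)"

text \<open>The hypotheses on \<open>V\<close> exclude the two expansions of a dyadic rational: at the first
digit \<open>j\<close> where \<open>u\<close> and \<open>V\<close> differ they force a gap of at least \<open>2^(-(j+1+k))\<close>
between the two values.\<close>

lemma common_prefix_if_bin_val_close:
  assumes zeros: "syndetic k (\<lambda>n. \<not> V n)" and ones: "syndetic k V \<or> (\<forall>n. \<not> V n)"
    and close: "\<bar>bin_val u - bin_val V\<bar> < (1/2) ^ (L + k)"
  shows "\<forall>j<L. u j = V j"
proof (rule ccontr)
  assume "\<not> (\<forall>j<L. u j = V j)"
  then obtain j0 where "j0 < L" "u j0 \<noteq> V j0" by blast
  obtain j where "j \<le> j0" "u j \<noteq> V j" and agree: "\<forall>n<j. u n = V n"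
    by (rule obtain_first_difference[of u j0 V, OF \<open>u j0 \<noteq> V j0\<close>])
  have "j < L" using \<open>j \<le> j0\<close> \<open>j0 < L\<close> by simp
  have small: "(1/2::real) ^ (L + k) \<le> (1/2) ^ (Suc j + k)"
    using \<open>j < L\<close> by (intro power_decreasing) auto
  show False
  proof (cases "u j")
    case True
    obtain i where "Suc j \<le> i" "i < Suc j + k" "\<not> V i"
      using zeros unfolding syndetic_def by blast
    then have "(1/2) ^ (Suc j + k) \<le> bin_val u - bin_val V"
      using \<open>u j \<noteq> V j\<close> True agree by (intro bin_val_gap_first_difference[where i = i]) auto
    then show False
      using small close by linarith
  next
    case False
    then have "V j" "\<forall>n<j. V n = u n"
      using \<open>u j \<noteq> V j\<close> agree by auto
    then obtain i where "Suc j \<le> i" "i < Suc j + k" "V i"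
      using ones unfolding syndetic_def by blast
    then have "(1/2) ^ (Suc j + k) \<le> bin_val V - bin_val u"
      using \<open>V j\<close> \<open>\<forall>n<j. V n = u n\<close> False by (intro bin_val_gap_first_difference[where i = i]) auto
    then show False
      using small close by linarith
  qed
qed

lemma exists_mod_eq_in_window:
  assumes "r < (k::nat)"
  shows "\<exists>j. i \<le> j \<and> j < i + k \<and> j mod k = r"
proof -
  define q where "q = i div k"
  have window: "q * k \<le> i" "i < q * k + k"
    using assms div_mult_mod_eq[of i k] mod_less_divisor[of k i] unfolding q_def by linarith+
  have residue: "(r + q * k) mod k = r" "(r + (q + 1) * k) mod k = r"
    using assms by (simp_all only: mod_mult_self1 mod_less)
  show ?thesis
  proof (cases "i \<le> r + q * k")
    case True
    with window residue assms show ?thesis by (intro exI[of _ "r + q * k"]) simp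
  next
    case False
    with window residue assms show ?thesis by (intro exI[of _ "r + (q + 1) * k"]) simp
  qed
qed

lemma syndetic_omega_word:
  assumes "r < length w" "P (w ! r)"
  shows "syndetic (length w) (\<lambda>n. P (omega_word w n))"
  unfolding syndetic_def omega_word_def
  using exists_mod_eq_in_window[OF assms(1)] assms(2) by metis

definition block_word :: "nat \<Rightarrow> (nat \<Rightarrow> bool list) \<Rightarrow> nat \<Rightarrow> bool" where
  "block_word k B j = B (j div k) ! (j mod k)"

lemma block_word_nth: "r < k \<Longrightarrow> block_word k B (i * k + r) = B i ! r"
  by (simp add: block_word_def)

lemma block_block_word:
  assumes "\<And>i. length (B i) = k"
  shows "block k (block_word k B) i = B i"
  using assms[of i] by (auto simp: block_def block_word_nth intro: nth_equalityI)

lemma omega_word_eq_block_word: "length w = k \<Longrightarrow> omega_word w = block_word k (\<lambda>_. w)"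
  by (simp add: fun_eq_iff omega_word_def block_word_def)

lemma block_word_common_prefix:
  assumes "\<forall>i<n. B i = B' i" "\<forall>r<j. B n ! r = B' n ! r" "j \<le> k"
  shows "\<forall>m < n * k + j. block_word k B m = block_word k B' m"
proof (intro allI impI)
  fix m assume m: "m < n * k + j"
  show "block_word k B m = block_word k B' m"
  proof (cases "m < n * k")
    case True
    then have "m div k < n" by (simp add: less_mult_imp_div_less)
    then show ?thesis using assms(1) by (simp add: block_word_def)
  next
    case False
    then have "m = n * k + (m - n * k)" "m - n * k < j" using m by auto
    then show ?thesis
      using assms(2,3) block_word_nth[of "m - n * k" k] by (metis order_less_le_trans)
  qed
qed

lemma concat_word_case_nat:
  "concat_word (case_nat x u) n = (if n < length x then x ! n else concat_word u (n - length x))"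
proof -
  have ex_nat_cases: "(\<exists>i. P i) \<longleftrightarrow> P 0 \<or> (\<exists>i. P (Suc i))" for P :: "nat \<Rightarrow> bool"
    by (metis not0_implies_Suc)
  have shift: "(\<Sum>l<Suc i. length (case_nat x u l)) = length x + (\<Sum>l<i. length (u l))" for i
    by (simp only: sum.lessThan_Suc_shift) simp
  have "concat_word (case_nat x u) n \<longleftrightarrow> (n < length x \<and> x ! n) \<or>
      (\<exists>i j. j < length (u i) \<and> n = length x + (\<Sum>l<i. length (u l)) + j \<and> u i ! j)"
    unfolding concat_word_def by (subst ex_nat_cases) (simp only: shift, auto)
  moreover have "concat_word u (n - length x) \<longleftrightarrow>
      (\<exists>i j. j < length (u i) \<and> n = length x + (\<Sum>l<i. length (u l)) + j \<and> u i ! j)"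
    if "\<not> n < length x"
  proof -
    have "n - length x = m \<longleftrightarrow> n = length x + m" for m
      using that by arith
    then show ?thesis
      unfolding concat_word_def by (simp add: add.assoc)
  qed
  ultimately show ?thesis
    by auto
qed

lemma concat_word_case_nat_eq:
  assumes "\<forall>i<length p. v i = p ! i" and "(\<lambda>n. v (n + length p)) = concat_word u"
  shows "concat_word (case_nat p u) = v"
proof
  fix n
  show "concat_word (case_nat p u) n = v n"
    using assms fun_cong[OF assms(2), of "n - length p"]
    by (cases "n < length p") (simp_all add: concat_word_case_nat)
qed

lemma concat_word_empty_prefix:
  "concat_word (\<lambda>i. if i < n then [] else u (i - n)) = concat_word u"
proof (induction n)
  case (Suc n)
  have "(\<lambda>i. if i < Suc n then [] else u (i - Suc n)) =
      case_nat [] (\<lambda>i. if i < n then [] else u (i - n))"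
    by (simp add: fun_eq_iff split: nat.split)
  then show ?case
    using Suc by (simp add: fun_eq_iff concat_word_case_nat)
qed simp

lemma concat_word_interleave_empty:
  assumes "\<forall>i. u i \<noteq> []"
  shows "concat_word (\<lambda>m. if even m then u (m div 2) else []) n = concat_word u n"
  using assms
proof (induction n arbitrary: u rule: less_induct)
  case (less n)
  have interleave: "(\<lambda>m. if even m then u (m div 2) else []) =
      case_nat (u 0) (case_nat [] (\<lambda>m. if even m then u (Suc (m div 2)) else []))"
    by (auto simp: fun_eq_iff split: nat.split)
  have u: "u = case_nat (u 0) (\<lambda>i. u (Suc i))"
    by (simp add: fun_eq_iff split: nat.split)
  show ?case
  proof (cases "n < length (u 0)")
    case True
    then show ?thesis by (subst interleave, subst u) (simp add: concat_word_case_nat)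
  next
    case False
    moreover have "0 < length (u 0)"
      using less.prems by simp
    ultimately have "n - length (u 0) < n"
      by linarith
    with less.IH[of _ "\<lambda>i. u (Suc i)"] less.prems False show ?thesis
      by (subst interleave, subst u) (simp add: concat_word_case_nat)
  qed
qed

lemma f_sigma_bin_val:
  assumes "\<forall>N. \<exists>m\<ge>N. W m" and "W \<noteq> omega_word (w_eps k \<sigma>)"
  shows "f_sigma k \<sigma> (bin_val W) = bin_val (concat_word (\<lambda>i. \<sigma> (block k W i)))"
proof -
  have "0 < bin_val W"
    using assms(1) bin_val_pos by blast
  then show ?thesis
    using assms bin_val_le_1[of W] by (simp add: f_sigma_def expansion_bin_val)
qed

text \<open>If \<open>w\<close> is erased, the interleaved copies
of \<open>w\<close> do not change the image, and since every \<open>c\<^sub>i\<close> differs from \<open>w\<close> they make the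
word contain infinitely many ones.\<close>

definition padded_blocks ::
  "bool list \<Rightarrow> nat \<Rightarrow> bool list \<Rightarrow> (nat \<Rightarrow> bool list) \<Rightarrow> nat \<Rightarrow> bool list" where
  "padded_blocks w n b c i =
    (if i < n then w else case_nat b (\<lambda>m. if even m then c (m div 2) else w) (i - n))"

lemma length_padded_blocks:
  "length w = k \<Longrightarrow> length b = k \<Longrightarrow> \<forall>i. length (c i) = k \<Longrightarrow>
    length (padded_blocks w n b c i) = k"
  by (simp add: padded_blocks_def split: nat.split)

lemma concat_padded_blocks:
  assumes "\<sigma> w = []" and "\<forall>i. \<sigma> (c i) \<noteq> []"
  shows "concat_word (\<lambda>i. \<sigma> (padded_blocks w n b c i)) = concat_word (case_nat (\<sigma> b) (\<lambda>i. \<sigma> (c i)))"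
proof -
  have "(\<lambda>i. \<sigma> (padded_blocks w n b c i)) = (\<lambda>i. if i < n then [] else
      case_nat (\<sigma> b) (\<lambda>m. if even m then \<sigma> (c (m div 2)) else []) (i - n))"
    using assms(1) by (simp add: fun_eq_iff padded_blocks_def split: nat.split)
  then show ?thesis
    using concat_word_interleave_empty[OF assms(2)]
    by (simp add: concat_word_empty_prefix fun_eq_iff concat_word_case_nat)
qed

lemma padded_blocks_infinitely_many_ones:
  assumes "length w = k" and "\<forall>i. length (c i) = k \<and> c i \<noteq> w"
  shows "\<forall>N. \<exists>m\<ge>N. block_word k (padded_blocks w n b c) m"
proof
  fix N
  define i where "i = n + 2 * N + 1"
  have blocks: "padded_blocks w n b c i = c N" "padded_blocks w n b c (Suc i) = w"
    by (simp_all add: padded_blocks_def i_def)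
  obtain r where r: "r < k" "c N ! r \<noteq> w ! r"
    using assms by (auto simp: list_eq_iff_nth_eq)
  have "N \<le> i"
    by (simp add: i_def)
  also have "i \<le> i * k"
    using \<open>r < k\<close> by simp
  finally have "N \<le> i * k" .
  show "\<exists>m\<ge>N. block_word k (padded_blocks w n b c) m"
  proof (cases "c N ! r")
    case True
    then show ?thesis
      using \<open>N \<le> i * k\<close> block_word_nth[OF \<open>r < k\<close>, of "padded_blocks w n b c" i] blocks(1)
      by (intro exI[of _ "i * k + r"]) simp
  next
    case False
    then show ?thesis
      using \<open>N \<le> i * k\<close> block_word_nth[OF \<open>r < k\<close>, of "padded_blocks w n b c" "Suc i"] blocks(2) r(2)
      by (intro exI[of _ "Suc i * k + r"]) simp
  qed
qed

lemma padded_blocks_common_prefix: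
  assumes "length w = k" "j < k" "\<forall>r<j. b ! r = w ! r"
  shows "\<forall>m < n * k + j. block_word k (padded_blocks w n b c) m = omega_word w m"
    and "block_word k (padded_blocks w n b c) (n * k + j) = b ! j"
proof -
  have "\<forall>i<n. padded_blocks w n b c i = w" "padded_blocks w n b c n = b"
    by (simp_all add: padded_blocks_def)
  then show "\<forall>m < n * k + j. block_word k (padded_blocks w n b c) m = omega_word w m"
    using assms block_word_common_prefix[of n "padded_blocks w n b c" "\<lambda>_. w" j k]
    by (simp add: omega_word_eq_block_word)
  show "block_word k (padded_blocks w n b c) (n * k + j) = b ! j"
    using \<open>padded_blocks w n b c n = b\<close> block_word_nth[OF assms(2)] by simp
qed

locale optimal_erasing_subst =
  fixes k :: nat and \<sigma> :: "bool list \<Rightarrow> bool list"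
  assumes k_pos: "0 < k"
    and erasing: "erasing_block_subst k \<sigma>"
    and w_eps_not_ones: "w_eps k \<sigma> \<noteq> replicate k True"
    and optimal: "optimal k \<sigma>"
begin

abbreviation w\<^sub>\<epsilon> :: "bool list" where
  "w\<^sub>\<epsilon> \<equiv> w_eps k \<sigma>"

abbreviation x\<^sub>0 :: real where
  "x\<^sub>0 \<equiv> bin_val (omega_word w\<^sub>\<epsilon>)"

lemma length_w_eps: "length w\<^sub>\<epsilon> = k"
  and \<sigma>_w_eps: "\<sigma> w\<^sub>\<epsilon> = []"
  using theI'[OF erasing[unfolded erasing_block_subst_def]] by (simp_all add: w_eps_def)

lemma w_eps_has_zero: "\<exists>r<k. \<not> w\<^sub>\<epsilon> ! r"
  using w_eps_not_ones length_w_eps by (auto simp: list_eq_iff_nth_eq)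

lemma common_prefix_if_near_x0:
  assumes "\<bar>bin_val v - x\<^sub>0\<bar> < (1/2) ^ (L + k)"
  shows "\<forall>j<L. v j = omega_word w\<^sub>\<epsilon> j"
proof (rule common_prefix_if_bin_val_close[OF _ _ assms])
  show "syndetic k (\<lambda>n. \<not> omega_word w\<^sub>\<epsilon> n)"
    using w_eps_has_zero syndetic_omega_word[of _ w\<^sub>\<epsilon> Not] length_w_eps by auto
  show "syndetic k (omega_word w\<^sub>\<epsilon>) \<or> (\<forall>n. \<not> omega_word w\<^sub>\<epsilon> n)"
  proof (cases "\<exists>r<k. w\<^sub>\<epsilon> ! r")
    case True
    then show ?thesis
      using syndetic_omega_word[of _ w\<^sub>\<epsilon> "\<lambda>b. b"] length_w_eps by auto
  next
    case False
    then show ?thesis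
      using k_pos length_w_eps by (simp add: omega_word_def)
  qed
qed

lemma padded_preimage:
  assumes b: "length b = k" "\<sigma> b \<noteq> []"
    and j: "j < k" "\<forall>r<j. b ! r = w\<^sub>\<epsilon> ! r"
    and v: "\<forall>i<length (\<sigma> b). v i = \<sigma> b ! i"
  obtains W where "\<forall>N. \<exists>m\<ge>N. W m" and "concat_word (\<lambda>i. \<sigma> (block k W i)) = v"
    and "\<forall>m < n * k + j. W m = omega_word w\<^sub>\<epsilon> m" and "W (n * k + j) = b ! j"
proof -
  obtain c where c: "\<forall>i. length (c i) = k \<and> \<sigma> (c i) \<noteq> []"
    and rest: "(\<lambda>n. v (n + length (\<sigma> b))) = concat_word (\<lambda>i. \<sigma> (c i))"
    using optimal unfolding optimal_def by blast
  let ?W = "block_word k (padded_blocks w\<^sub>\<epsilon> n b c)"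
  show ?thesis
  proof (rule that[of ?W])
    have "\<forall>i. length (c i) = k \<and> c i \<noteq> w\<^sub>\<epsilon>"
      using c \<sigma>_w_eps by metis
    then show "\<forall>N. \<exists>m\<ge>N. ?W m"
      by (rule padded_blocks_infinitely_many_ones[OF length_w_eps])
    show "concat_word (\<lambda>i. \<sigma> (block k ?W i)) = v"
      using block_block_word[of "padded_blocks w\<^sub>\<epsilon> n b c"] length_padded_blocks length_w_eps b c
        concat_padded_blocks[of \<sigma> w\<^sub>\<epsilon> c n b] \<sigma>_w_eps concat_word_case_nat_eq[OF v rest]
      by simp
    show "\<forall>m < n * k + j. ?W m = omega_word w\<^sub>\<epsilon> m" "?W (n * k + j) = b ! j"
      using padded_blocks_common_prefix[OF length_w_eps j] by blast+
  qed
qed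

lemma preimage_near_x0:
  assumes b: "length b = k" "\<sigma> b \<noteq> []"
    and j: "j < k" "b ! j \<noteq> w\<^sub>\<epsilon> ! j" "\<forall>r<j. b ! r = w\<^sub>\<epsilon> ! r"
    and v: "\<forall>i<length (\<sigma> b). v i = \<sigma> b ! i"
    and "0 < e"
  shows "\<exists>t\<in>{0..1}. (if b ! j then x\<^sub>0 < t \<and> t < x\<^sub>0 + e else x\<^sub>0 - e < t \<and> t < x\<^sub>0)
    \<and> f_sigma k \<sigma> t = bin_val v"
proof -
  obtain n where "(1/2::real) ^ n < e"
    using real_arch_pow_inv[OF \<open>0 < e\<close>, of "1/2"] by auto
  moreover have "(1/2::real) ^ (n * k) \<le> (1/2) ^ n"
    using k_pos by (intro power_decreasing) auto
  ultimately have small: "(1/2::real) ^ (n * k) < e"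
    by linarith
  obtain W where ones: "\<forall>N. \<exists>m\<ge>N. W m" and image: "concat_word (\<lambda>i. \<sigma> (block k W i)) = v"
    and agree: "\<forall>m < n * k + j. W m = omega_word w\<^sub>\<epsilon> m" and W_at: "W (n * k + j) = b ! j"
    using padded_preimage[OF b j(1,3) v] .
  have V_at: "omega_word w\<^sub>\<epsilon> (i * k + j) = w\<^sub>\<epsilon> ! j" for i
    using omega_word_eq_block_word[OF length_w_eps] block_word_nth[OF j(1)] by simp
  have "f_sigma k \<sigma> (bin_val W) = bin_val v"
    using f_sigma_bin_val[OF ones] W_at V_at[of n] j(2) image by metis
  moreover have "\<bar>bin_val W - x\<^sub>0\<bar> \<le> (1/2) ^ (n * k)"
    using agree by (intro bin_val_dist_common_prefix) simp
  moreover have "if b ! j then x\<^sub>0 < bin_val W else bin_val W < x\<^sub>0"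
  proof (cases "b ! j")
    case True
    obtain i where "n * k + j < i" "W i"
      using ones by (metis Suc_le_eq)
    then show ?thesis
      using True agree W_at V_at[of n] j(2) by (simp add: bin_val_less_first_difference)
  next
    case False
    have "n * k + j < Suc n * k + j"
      using k_pos by simp
    moreover have "omega_word w\<^sub>\<epsilon> (Suc n * k + j)"
      using False j(2) V_at[of "Suc n"] by simp
    ultimately have "bin_val W < x\<^sub>0"
      using False agree W_at V_at[of n] j(2)
      by (intro bin_val_less_first_difference[of "n * k + j" _ W "Suc n * k + j"]) auto
    with False show ?thesis
      by simp
  qed
  ultimately show ?thesis
    using small bin_val_nonneg[of W] bin_val_le_1[of W]
    by (intro bexI[of _ "bin_val W"]) (auto split: if_splits)
qed

lemma one_sided_preimages_near_x0:
  obtains \<delta> s where "0 < \<delta>"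
    and "{0..1} \<inter> ball x\<^sub>0 \<delta> \<subseteq>
      (if s then R_plus (f_sigma k \<sigma>) x\<^sub>0 else R_minus (f_sigma k \<sigma>) x\<^sub>0)"
proof -
  obtain b where b: "\<forall>i. length (b i) = k \<and> \<sigma> (b i) \<noteq> []"
    and decomp: "omega_word w\<^sub>\<epsilon> = concat_word (\<lambda>i. \<sigma> (b i))"
    using optimal unfolding optimal_def by blast
  define p where "p = \<sigma> (b 0)"
  have "(\<lambda>i. \<sigma> (b i)) = case_nat p (\<lambda>i. \<sigma> (b (Suc i)))"
    by (simp add: fun_eq_iff p_def split: nat.split)
  then have prefix: "\<forall>i<length p. omega_word w\<^sub>\<epsilon> i = p ! i"
    using decomp by (simp add: concat_word_case_nat)
  have b0: "length (b 0) = k" "\<sigma> (b 0) \<noteq> []"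
    using b by simp_all
  then have "b 0 \<noteq> w\<^sub>\<epsilon>"
    using \<sigma>_w_eps by metis
  then obtain r where "r < k" "b 0 ! r \<noteq> w\<^sub>\<epsilon> ! r"
    using b0(1) length_w_eps by (auto simp: list_eq_iff_nth_eq)
  obtain j where "j \<le> r" and j: "b 0 ! j \<noteq> w\<^sub>\<epsilon> ! j" "\<forall>i<j. b 0 ! i = w\<^sub>\<epsilon> ! i"
    using \<open>b 0 ! r \<noteq> w\<^sub>\<epsilon> ! r\<close> by (rule obtain_first_difference)
  have "j < k"
    using \<open>j \<le> r\<close> \<open>r < k\<close> by simp
  show ?thesis
  proof (rule that[of "(1/2) ^ (length p + k)" "b 0 ! j"])
    show "{0..1} \<inter> ball x\<^sub>0 ((1/2) ^ (length p + k)) \<subseteq>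
        (if b 0 ! j then R_plus (f_sigma k \<sigma>) x\<^sub>0 else R_minus (f_sigma k \<sigma>) x\<^sub>0)"
    proof
      fix y assume "y \<in> {0..1} \<inter> ball x\<^sub>0 ((1/2) ^ (length p + k))"
      then obtain v where "bin_val v = y" "\<bar>bin_val v - x\<^sub>0\<bar> < (1/2) ^ (length p + k)"
        using bin_val_surj by (auto simp: dist_real_def abs_minus_commute)
      then have "\<forall>i<length p. v i = omega_word w\<^sub>\<epsilon> i"
        using common_prefix_if_near_x0 by simp
      with prefix have v_prefix: "\<forall>i<length (\<sigma> (b 0)). v i = \<sigma> (b 0) ! i"
        by (simp add: p_def)
      have "\<exists>t\<in>{0..1}. (if b 0 ! j then x\<^sub>0 < t \<and> t < x\<^sub>0 + e else x\<^sub>0 - e < t \<and> t < x\<^sub>0)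
          \<and> f_sigma k \<sigma> t = y" if "0 < e" for e
        using preimage_near_x0[OF b0 \<open>j < k\<close> j v_prefix that] \<open>bin_val v = y\<close> by simp
      then show "y \<in> (if b 0 ! j then R_plus (f_sigma k \<sigma>) x\<^sub>0 else R_minus (f_sigma k \<sigma>) x\<^sub>0)"
        by (cases "b 0 ! j") (simp_all add: R_plus_def R_minus_def)
    qed
  qed simp
qed

end

theorem lemma4p9:
  fixes k :: nat and \<sigma> :: "bool list \<Rightarrow> bool list"
  assumes "k \<ge> 2"
    and "erasing_block_subst k \<sigma>"
    and "w_eps k \<sigma> \<noteq> replicate k True"
    and "optimal k \<sigma>"
  shows "almost_fixed_point (f_sigma k \<sigma>) (bin_val (omega_word (w_eps k \<sigma>)))"
proof -
  interpret optimal_erasing_subst k \<sigma>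
    using assms by unfold_locales auto
  obtain \<delta> s where "0 < \<delta>" and "{0..1} \<inter> ball x\<^sub>0 \<delta> \<subseteq>
      (if s then R_plus (f_sigma k \<sigma>) x\<^sub>0 else R_minus (f_sigma k \<sigma>) x\<^sub>0)"
    by (rule one_sided_preimages_near_x0)
  moreover have "openin (top_of_set {0..1}) ({0..1} \<inter> ball x\<^sub>0 \<delta>)"
    by (intro openin_open_Int) simp
  ultimately have "{0..1} \<inter> ball x\<^sub>0 \<delta> \<subseteq> top_of_set {0..1} interior_of
      (if s then R_plus (f_sigma k \<sigma>) x\<^sub>0 else R_minus (f_sigma k \<sigma>) x\<^sub>0)"
    by (intro interior_of_maximal)
  moreover have "x\<^sub>0 \<in> {0..1} \<inter> ball x\<^sub>0 \<delta>"
    using bin_val_nonneg bin_val_le_1 \<open>0 < \<delta>\<close> by simp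
  ultimately show ?thesis
    unfolding almost_fixed_point_def by (cases s) auto
qed

end
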